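(* (1) If $q$ is even, then $\mathrm{Pr}(\mathrm{Fig}(T))=m_T$. (2) If $q$ is odd, then $\mathrm{Pr}(\mathrm{Fig}(T))=\{T^\phi,T^{\phi^2}\}\cup\mathcal S_{-1}\cup\bigcup\{\mathcal S_\theta:\theta\in\mathbb{F}_{q^3}^*,\ N(\theta)\text{ a nonzero square in }\mathbb{F}_q\}$. Further $|\mathrm{Pr}(\mathrm{Fig}(T))|$ equals $2+\frac{q-1}{2}(q^2+q+1)$ if $q\equiv1\pmod 4$ and $2+\frac{q+1}{2}(q^2+q+1)$ if $q\equiv3\pmod4$.
   Context: Let $q$ be a prime power, $\mathbb{F}_{q^3}^*=\mathbb{F}_{q^3}\setminus\{0\}$, $N(x)=x^{q^2+q+1}$. Points of $\mathrm{PG}(2,q^3)$ have homogeneous coordinates $(x,y,z)$ and lines $[a,b,c]$. Let $\phi$ be the collineation $(x,y,z)\mapsto(z^q,x^q,y^q)$ (on lines $[d,e,f]\mapsto[f^q,d^q,e^q]$). A point has Type II (resp. III) if its $\phi$-orbit is three collinear (resp. non-collinear) points; a line has Type III if its $\phi$-orbit is three non-concurrent lines. For a Type III point $X$, the Fig-block is $\mathrm{Fig}(X)=\mathcal E_X\cup\mathcal F_X$, where $\mathcal E_X$ is the set of Type II points on the line $X^\phi X^{\phi^2}$ and $\mathcal F_X=\{\ell^\phi\cap\ell^{\phi^2}:\ell\text{ a Type III line through }X\}$. Let $T=(0,0,1)$ (a Type III point), $T^\phi=(1,0,0)$, $T^{\phi^2}=(0,1,0)$, and $m_T=T^\phi T^{\phi^2}$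 the line $[0,0,1]$. For a point $P\neq T$, $\mathrm{Pr}(P)=TP\cap m_T$, and for a set of points not containing $T$, $\mathrm{Pr}$ is applied elementwise. For $\theta\in\mathbb{F}_{q^3}^*$, $\mathcal S_\theta=\{(x\theta,x^q,0):x\in\mathbb{F}_{q^3}^*\}$. *)

theory Defs
  imports Main "HOL-Computational_Algebra.Primes"
begin

text \<open>Points (and lines) of PG(2,F) are represented as classes of nonzero
  homogeneous coordinate triples up to nonzero scalars.\<close>

type_synonym 'a vec3 = "'a \<times> 'a \<times> 'a"

definition pt :: "'a::field vec3 \<Rightarrow> 'a vec3 set" where
  "pt v = (\<lambda>c. (c * fst v, c * fst (snd v), c * snd (snd v))) ` {c. c \<noteq> 0}"

definition points :: "'a::field vec3 set set" where
  "points = {pt v | v. v \<noteq> (0, 0, 0)}"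

abbreviation lines :: "'a::field vec3 set set" where
  "lines \<equiv> points"

definition dot3 :: "'a::field vec3 \<Rightarrow> 'a vec3 \<Rightarrow> 'a" where
  "dot3 v w = fst v * fst w + fst (snd v) * fst (snd w) + snd (snd v) * snd (snd w)"

definition incid :: "'a::field vec3 set \<Rightarrow> 'a vec3 set \<Rightarrow> bool" where
  "incid P L \<longleftrightarrow> (\<exists>v\<in>P. \<exists>w\<in>L. dot3 v w = 0)"

definition pts_on :: "'a::field vec3 set \<Rightarrow> 'a vec3 set set" where
  "pts_on L = {P \<in> points. incid P L}"

definition join :: "'a::field vec3 set \<Rightarrow> 'a vec3 set \<Rightarrow> 'a vec3 set" where
  "join P Q = (THE L. L \<in> lines \<and> incid P L \<and> incid Q L)"

definition meet :: "'a::field vec3 set \<Rightarrow> 'a vec3 set \<Rightarrow> 'a vec3 set" where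
  "meet L M = (THE P. P \<in> points \<and> incid P L \<and> incid P M)"

definition collinear :: "'a::field vec3 set set \<Rightarrow> bool" where
  "collinear S \<longleftrightarrow> (\<exists>L\<in>lines. \<forall>P\<in>S. incid P L)"

definition concurrent :: "'a::field vec3 set set \<Rightarrow> bool" where
  "concurrent S \<longleftrightarrow> (\<exists>P\<in>points. \<forall>L\<in>S. incid P L)"

text \<open>The collineation phi: (x,y,z) to (z^q,x^q,y^q); on lines [d,e,f] to
  [f^q,d^q,e^q], i.e. the same formula on coordinate classes.\<close>
definition phi :: "nat \<Rightarrow> 'a::field vec3 set \<Rightarrow> 'a vec3 set" where
  "phi q P = (\<lambda>v. (snd (snd v) ^ q, fst v ^ q, fst (snd v) ^ q)) ` P"

definition orb :: "nat \<Rightarrow> 'a::field vec3 set \<Rightarrow> 'a vec3 set set" where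
  "orb q P = {P, phi q P, phi q (phi q P)}"

definition typeII_pt :: "nat \<Rightarrow> 'a::field vec3 set \<Rightarrow> bool" where
  "typeII_pt q P \<longleftrightarrow> P \<in> points \<and> card (orb q P) = 3 \<and> collinear (orb q P)"

definition typeIII_pt :: "nat \<Rightarrow> 'a::field vec3 set \<Rightarrow> bool" where
  "typeIII_pt q P \<longleftrightarrow> P \<in> points \<and> card (orb q P) = 3 \<and> \<not> collinear (orb q P)"

definition typeIII_line :: "nat \<Rightarrow> 'a::field vec3 set \<Rightarrow> bool" where
  "typeIII_line q L \<longleftrightarrow> L \<in> lines \<and> card (orb q L) = 3 \<and> \<not> concurrent (orb q L)"

definition E_set :: "nat \<Rightarrow> 'a::field vec3 set \<Rightarrow> 'a vec3 set set" where
  "E_set q X = {P. typeII_pt q P \<and> incid P (join (phi q X) (phi q (phi q X)))}"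

definition F_set :: "nat \<Rightarrow> 'a::field vec3 set \<Rightarrow> 'a vec3 set set" where
  "F_set q X = {meet (phi q l) (phi q (phi q l)) | l. typeIII_line q l \<and> incid X l}"

definition Fig :: "nat \<Rightarrow> 'a::field vec3 set \<Rightarrow> 'a vec3 set set" where
  "Fig q X = E_set q X \<union> F_set q X"

definition Tpt :: "'a::field vec3 set" where
  "Tpt = pt (0, 0, 1)"

text \<open>m_T = T^phi T^phi^2, the line [0,0,1].\<close>
definition mT :: "'a::field vec3 set" where
  "mT = pt (0, 0, 1)"

definition Pr :: "'a::field vec3 set \<Rightarrow> 'a vec3 set" where
  "Pr P = meet (join Tpt P) mT"

definition S_theta :: "nat \<Rightarrow> 'a::field \<Rightarrow> 'a vec3 set set" where
  "S_theta q \<theta> = {pt (x * \<theta>, x ^ q, 0) | x. x \<noteq> 0}"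

definition normq :: "nat \<Rightarrow> 'a::field \<Rightarrow> 'a" where
  "normq q x = x ^ (q^2 + q + 1)"

text \<open>Nonzero square in the subfield F_q = {s. s^q = s}.\<close>
definition nz_square_Fq :: "nat \<Rightarrow> 'a::field \<Rightarrow> bool" where
  "nz_square_Fq q a \<longleftrightarrow> (\<exists>s. s ^ q = s \<and> s \<noteq> 0 \<and> a = s ^ 2)"

end

theory Submission
  imports Defs "HOL-Computational_Algebra.Polynomial"
begin

text \<open>
  With \<open>T = (0,0,1)\<close> every line through \<open>T\<close>, and every point of \<open>m\<^sub>T\<close> other than
  \<open>T\<^sup>\<phi> = (1,0,0)\<close>, has coordinates \<open>(s,1,0)\<close>. The \<open>\<phi>\<close>-orbit of \<open>(s,1,0)\<close> is
  \<open>(s,1,0), (0,s\<^sup>q,1), (1,0,s\<^sup>q\<^sup>2)\<close>, which is collinear exactly when \<open>N(s) = -1\<close>.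
  Hence \<open>\<E>\<^sub>T\<close> consists of the points \<open>(t,1,0)\<close> with \<open>N(t) = -1\<close>, while a type III line
  \<open>[s,1,0]\<close> contributes to \<open>\<F>\<^sub>T\<close> a point projecting to \<open>(s\<^sup>q s\<^sup>q\<^sup>2, 1, 0)\<close>, and
  \<open>s\<^sup>q s\<^sup>q\<^sup>2 = N(s)/s\<close>. If \<open>N(s) = c\<close> then \<open>t = c/s\<close> has \<open>N(t) = c\<^sup>2\<close>, and conversely
  \<open>s = c/t\<close>; so the projection of \<open>\<F>\<^sub>T\<close> is \<open>(0,1,0)\<close> together with the points \<open>(t,1,0)\<close>
  for which \<open>N(t)\<close> is the square of some \<open>c \<in> \<F>\<^sub>q\<^sup>*\<close> with \<open>c \<noteq> -1\<close>. In characteristic 2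
  every element of \<open>\<F>\<^sub>q\<^sup>*\<close> is a square and the excluded value \<open>N(t) = 1 = -1\<close> is covered by
  \<open>\<E>\<^sub>T\<close>; for odd \<open>q\<close> the condition \<open>c \<noteq> -1\<close> is harmless since \<open>(-c)\<^sup>2 = c\<^sup>2\<close>.
  The count follows because the norm maps the nonzero elements of the field of order \<open>q\<^sup>3\<close>
  onto \<open>\<F>\<^sub>q\<^sup>*\<close> with fibres of size \<open>q\<^sup>2 + q + 1\<close> (Hilbert 90), \<open>\<F>\<^sub>q\<^sup>*\<close> has \<open>(q - 1)/2\<close> nonzero squares, and
  \<open>-1\<close> is a square in \<open>\<F>\<^sub>q\<close> iff \<open>q \<equiv> 1 (mod 4)\<close>.
\<close>

section \<open>Finite fields\<close>

lemma finite_field_power_card: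
  fixes x :: "'a::{field,finite}"
  shows "x ^ card (UNIV :: 'a set) = x"
proof (cases "x = 0")
  case False
  have "x * (\<Prod>y\<in>UNIV-{0}. x * y) = x * x ^ (card (UNIV :: 'a set) - 1) * \<Prod>(UNIV-{0})"
    by (simp add: prod.distrib mult_ac)
  also have "x * x ^ (card (UNIV :: 'a set) - 1) = x ^ card (UNIV :: 'a set)"
    using finite_UNIV_card_ge_0[where ?'a = 'a] by (cases "card (UNIV :: 'a set)") simp_all
  also have "(\<Prod>y\<in>UNIV-{0}. x * y) = (\<Prod>y\<in>UNIV-{0}. y)"
    by (rule prod.reindex_bij_witness[of _ "\<lambda>y. y / x" "\<lambda>y. x * y"]) (use False in auto)
  finally show ?thesis
    by simp
qed (use finite_UNIV_card_ge_0[where ?'a = 'a] in auto)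

lemma involution_orbits_eq:
  assumes "g (g x) = x" and "g (g y) = y" and "z \<in> {x, g x}" and "z \<in> {y, g y}"
  shows "{x, g x} = {y, g y}"
proof -
  consider "x = y" | "x = g y" | "g x = y" | "g x = g y"
    using assms(3,4) by blast
  then show ?thesis
  proof cases
    case 2
    then show ?thesis
      using assms(2) by (simp add: insert_commute)
  next
    case 3
    then show ?thesis
      using assms(1) by (simp add: insert_commute)
  next
    case 4
    then have "x = y"
      using assms(1,2) by metis
    then show ?thesis
      by simp
  qed simp
qed

lemma even_card_if_involution:
  assumes "finite A" and "\<And>x. x \<in> A \<Longrightarrow> g x \<in> A"
    and "\<And>x. x \<in> A \<Longrightarrow> g (g x) = x" and "\<And>x. x \<in> A \<Longrightarrow> g x \<noteq> x"
  shows "even (card A)"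
proof -
  let ?C = "(\<lambda>x. {x, g x}) ` A"
  have "2 * card ?C = card (\<Union>?C)"
  proof (rule card_partition)
    show "finite ?C" "finite (\<Union>?C)"
      using assms(1,2) by auto
    show "card c = 2" if "c \<in> ?C" for c
    proof -
      obtain x where "x \<in> A" and c: "c = {x, g x}"
        using \<open>c \<in> ?C\<close> by blast
      then have "x \<noteq> g x"
        using assms(4) by metis
      then show ?thesis
        unfolding c by simp
    qed
    show "c1 \<inter> c2 = {}" if "c1 \<in> ?C" "c2 \<in> ?C" and "c1 \<noteq> c2" for c1 c2
    proof -
      obtain x y where "x \<in> A" "y \<in> A" and c: "c1 = {x, g x}" "c2 = {y, g y}"
        using \<open>c1 \<in> ?C\<close> \<open>c2 \<in> ?C\<close> by blast
      then have "g (g x) = x" and "g (g y) = y"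
        using assms(3) by auto
      then show ?thesis
        using \<open>c1 \<noteq> c2\<close> involution_orbits_eq[of g x y] unfolding c by blast
    qed
  qed
  moreover have "\<Union>?C = A"
    using assms(2) by auto
  ultimately have "card A = 2 * card ?C"
    by simp
  then show ?thesis
    by simp
qed

lemma finite_field_even_card_iff:
  "even (card (UNIV :: 'a::{field,finite} set)) \<longleftrightarrow> (-1::'a) = 1"
proof
  assume even: "even (card (UNIV :: 'a set))"
  show "(-1::'a) = 1"
  proof (rule ccontr)
    assume "(-1::'a) \<noteq> 1"
    then have "- x \<noteq> x" if "x \<noteq> 0" for x :: 'a
      using that mult_cancel_right[of "-1" x 1] by simp
    then have "even (card (UNIV - {0::'a}))"
      by (intro even_card_if_involution[where g = uminus]) auto
    moreover have "card (UNIV - {0::'a}) = card (UNIV :: 'a set) - 1"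
      by (simp add: card_Diff_singleton)
    ultimately show False
      using even finite_UNIV_card_ge_0[where ?'a = 'a] by simp
  qed
next
  assume "(-1::'a) = 1"
  then have "(1::'a) + 1 = 0"
    by (metis eq_neg_iff_add_eq_0)
  then have "x + 1 + 1 = x" for x :: 'a
    by (simp add: add.assoc)
  then show "even (card (UNIV :: 'a set))"
    by (intro even_card_if_involution[where g = "\<lambda>x. x + 1"]) auto
qed

lemma card_roots_of_unity_le:
  assumes "0 < k"
  shows "card {x :: 'a::idom. x ^ k = 1} \<le> k"
proof -
  let ?p = "monom 1 k - 1 :: 'a poly"
  have "coeff ?p k = 1"
    using assms by simp
  then have "?p \<noteq> 0"
    by (metis coeff_0 zero_neq_one)
  moreover have "degree ?p \<le> k"
    by (rule order.trans[OF degree_diff_le]) (auto simp: degree_monom_le)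
  moreover have "{x. x ^ k = 1} = {x. poly ?p x = 0}"
    by (simp add: poly_monom)
  ultimately show ?thesis
    using card_poly_roots_bound[of ?p] by simp
qed

context
  fixes G :: "'a::field set" and f :: "'a \<Rightarrow> 'b::field"
  assumes mult_closed: "\<And>x y. x \<in> G \<Longrightarrow> y \<in> G \<Longrightarrow> x * y \<in> G"
    and inverse_closed: "\<And>x. x \<in> G \<Longrightarrow> inverse x \<in> G"
    and zero_notin: "0 \<notin> G"
    and multiplicative: "\<And>x y. x \<in> G \<Longrightarrow> y \<in> G \<Longrightarrow> f (x * y) = f x * f y"
    and nonzero: "\<And>x. x \<in> G \<Longrightarrow> f x \<noteq> 0"
begin

lemma card_multiplicative_fibre:
  assumes "a \<in> G"
  shows "card {x \<in> G. f x = f a} = card {x \<in> G. f x = 1}"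
proof -
  have "a \<noteq> 0"
    using assms zero_notin by auto
  have "{x \<in> G. f x = f a} = (\<lambda>k. a * k) ` {k \<in> G. f k = 1}"
  proof (intro set_eqI iffI)
    fix x assume x: "x \<in> {x \<in> G. f x = f a}"
    let ?k = "inverse a * x"
    have "?k \<in> G"
      using x assms mult_closed inverse_closed by auto
    moreover have "f a * f ?k = f a * 1"
      using multiplicative[OF assms \<open>?k \<in> G\<close>] x \<open>a \<noteq> 0\<close> by (simp add: field_simps)
    ultimately show "x \<in> (\<lambda>k. a * k) ` {k \<in> G. f k = 1}"
      using nonzero[OF assms] \<open>a \<noteq> 0\<close> by (auto intro!: image_eqI[of _ _ ?k])
  qed (use assms mult_closed multiplicative in auto)
  moreover have "inj_on (\<lambda>k. a * k) {k \<in> G. f k = 1}"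
    using \<open>a \<noteq> 0\<close> by (auto simp: inj_on_def)
  ultimately show ?thesis
    by (simp add: card_image)
qed

lemma card_eq_card_image_mult_card_kernel:
  assumes "finite G"
  shows "card G = card (f ` G) * card {x \<in> G. f x = 1}"
proof -
  have "card G = (\<Sum>y\<in>f ` G. card {x \<in> G. f x = y})"
    unfolding card_eq_sum by (rule sum.image_gen[OF assms])
  also have "\<dots> = (\<Sum>y\<in>f ` G. card {x \<in> G. f x = 1})"
    using card_multiplicative_fibre by (intro sum.cong) auto
  finally show ?thesis
    by simp
qed

end

lemma eq_if_le_and_mult_eq:
  fixes a b m n :: nat
  assumes "a \<le> m" and "b \<le> n" and "a * b = m * n" and "0 < m" and "0 < n"
  shows "a = m" and "b = n"
proof -
  have "a * b \<le> a * n"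
    using assms(2) by simp
  then have "m * n \<le> a * n"
    using assms(3) by simp
  then show "a = m"
    using assms(1,5) by simp
  then show "b = n"
    using assms(3,4) by simp
qed

section \<open>The norm onto \<open>\<F>\<^sub>q\<close>\<close>

definition units_Fq :: "nat \<Rightarrow> 'a::field set" where
  "units_Fq q = {c. c \<noteq> 0 \<and> c ^ q = c}"

lemma units_Fq_power_pred:
  assumes "0 < q" and "c \<in> units_Fq q"
  shows "c ^ (q - 1) = 1"
proof -
  have "c * c ^ (q - 1) = c ^ q"
    using assms(1) by (cases q) simp_all
  then have "c * c ^ (q - 1) = c * 1"
    using assms(2) by (simp add: units_Fq_def)
  then show ?thesis
    using assms(2) by (simp add: units_Fq_def)
qed

lemma nz_square_Fq_iff: "nz_square_Fq q a \<longleftrightarrow> a \<in> (\<lambda>c. c ^ 2) ` units_Fq q"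
  by (auto simp: nz_square_Fq_def units_Fq_def)

lemma units_Fq_power_closed:
  assumes "c \<in> units_Fq q"
  shows "c ^ k \<in> units_Fq q"
proof -
  have "(c ^ k) ^ q = (c ^ q) ^ k"
    by (metis power_mult mult.commute)
  then show ?thesis
    using assms by (simp add: units_Fq_def)
qed

lemma normq_eq_mult_conjugates: "normq q x = x * x ^ q * (x ^ q) ^ q"
  by (simp add: normq_def power_add power_mult[symmetric] power2_eq_square mult_ac)

lemma normq_mult: "normq q (x * y) = normq q x * normq q y"
  by (simp add: normq_def power_mult_distrib)

lemma normq_divide: "normq q (x / y) = normq q x / normq q y"
  by (simp add: normq_def power_divide)

lemma normq_power: "normq q (x ^ k) = normq q x ^ k"
  unfolding normq_def by (metis power_mult mult.commute)

lemma normq_eq_0_iff [simp]: "normq q x = 0 \<longleftrightarrow> x = 0"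
  by (auto simp: normq_def)

lemma normq_0 [simp]: "normq q 0 = 0"
  by simp

lemma normq_fixed: "c ^ q = c \<Longrightarrow> normq q c = c ^ 3"
  by (simp add: normq_eq_mult_conjugates power3_eq_cube)

lemma conjugate_product_eq: "s \<noteq> 0 \<Longrightarrow> s ^ q * (s ^ q) ^ q = normq q s / s"
  unfolding normq_eq_mult_conjugates mult.assoc by (rule nonzero_mult_div_cancel_left[symmetric])

locale cubic_extension =
  fixes q :: nat
  assumes q_gt_1: "1 < q"
    and card_UNIV: "card (UNIV :: 'a::{field,finite} set) = q ^ 3"
begin

lemma q_pos: "0 < q"
  using q_gt_1 by simp

lemma zero_power_q [simp]: "(0::'a) ^ q = 0"
  using q_pos by (simp add: power_0_left)

lemma frobenius_cube: "(((x::'a) ^ q) ^ q) ^ q = x"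
  using finite_field_power_card[of x] by (simp add: card_UNIV power3_eq_cube flip: power_mult)

lemma normq_power_q: "normq q (x::'a) ^ q = normq q x"
  by (simp add: normq_eq_mult_conjugates power_mult_distrib frobenius_cube mult_ac)

lemma normq_in_units_Fq: "(x::'a) \<noteq> 0 \<Longrightarrow> normq q x \<in> units_Fq q"
  by (simp add: units_Fq_def normq_power_q)

lemma odd_iff_minus_one_neq_one: "odd q \<longleftrightarrow> (-1::'a) \<noteq> 1"
  using finite_field_even_card_iff[where 'a = 'a] by (simp add: card_UNIV)

lemma minus_one_in_units_Fq: "(-1::'a) \<in> units_Fq q"
  using odd_iff_minus_one_neq_one by (auto simp: units_Fq_def minus_one_power_iff)

lemma card_units_Fq_le: "card (units_Fq q :: 'a set) \<le> q - 1"
proof -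
  have "units_Fq q \<subseteq> {x::'a. x ^ (q - 1) = 1}"
    using units_Fq_power_pred[OF q_pos] by auto
  then have "card (units_Fq q :: 'a set) \<le> card {x::'a. x ^ (q - 1) = 1}"
    by (intro card_mono) auto
  also have "\<dots> \<le> q - 1"
    using q_gt_1 by (intro card_roots_of_unity_le) simp
  finally show ?thesis .
qed

lemma card_nonzero_elements: "card (UNIV - {0::'a}) = (q\<^sup>2 + q + 1) * (q - 1)"
  using q_gt_1 by (simp add: card_UNIV card_Diff_singleton power2_eq_square power3_eq_cube
      algebra_simps diff_mult_distrib2)

text \<open>The map \<open>x \<mapsto> x / x\<^sup>q\<close> on the nonzero elements has kernel \<open>\<F>\<^sub>q\<^sup>*\<close> and
  lands in the kernel of the norm; both have at most \<open>q - 1\<close> and \<open>q\<^sup>2 + q + 1\<close> elements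
  (roots of polynomials), and \<open>q\<^sup>3 - 1 = (q\<^sup>2 + q + 1)(q - 1)\<close> forces both bounds to be sharp.\<close>
theorem hilbert90:
  shows card_units_Fq: "card (units_Fq q :: 'a set) = q - 1"
    and image_divide_frobenius: "(\<lambda>x::'a. x / x ^ q) ` (UNIV - {0}) = {u. normq q u = 1}"
    and card_normq_eq_1: "card {u::'a. normq q u = 1} = q\<^sup>2 + q + 1"
proof -
  let ?h = "\<lambda>x::'a. x / x ^ q" and ?G = "UNIV - {0::'a}" and ?U = "{u::'a. normq q u = 1}"
  have image_sub: "?h ` ?G \<subseteq> ?U"
    by (auto simp: normq_divide normq_power normq_power_q)
  have "card ?G = card (?h ` ?G) * card {x \<in> ?G. ?h x = 1}"
    by (rule card_eq_card_image_mult_card_kernel) (auto simp: power_mult_distrib)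
  moreover have "{x \<in> ?G. ?h x = 1} = units_Fq q"
    by (auto simp: units_Fq_def)
  ultimately have product: "card (?h ` ?G) * card (units_Fq q :: 'a set) = (q\<^sup>2 + q + 1) * (q - 1)"
    by (simp add: card_nonzero_elements)
  have card_U_le: "card ?U \<le> q\<^sup>2 + q + 1"
    unfolding normq_def by (rule card_roots_of_unity_le) simp
  have image_le: "card (?h ` ?G) \<le> card ?U"
    using image_sub by (intro card_mono) auto
  have card_image: "card (?h ` ?G) = q\<^sup>2 + q + 1"
    and "card (units_Fq q :: 'a set) = q - 1"
    using eq_if_le_and_mult_eq[OF _ card_units_Fq_le product] image_le card_U_le q_gt_1 by simp_all
  then show "card (units_Fq q :: 'a set) = q - 1"
    by simp
  show card_U: "card ?U = q\<^sup>2 + q + 1"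
    using card_image image_le card_U_le by simp
  show "(\<lambda>x::'a. x / x ^ q) ` (UNIV - {0}) = {u. normq q u = 1}"
    using image_sub card_U card_image by (intro card_subset_eq) auto
qed

lemma normq_image: "normq q ` (UNIV - {0}) = (units_Fq q :: 'a set)"
proof (rule card_subset_eq)
  show "normq q ` (UNIV - {0}) \<subseteq> (units_Fq q :: 'a set)"
    using normq_in_units_Fq by auto
  have "card (UNIV - {0::'a}) = card (normq q ` (UNIV - {0::'a})) * card {x \<in> UNIV - {0::'a}. normq q x = 1}"
    by (rule card_eq_card_image_mult_card_kernel) (auto simp: normq_mult)
  also have "{x \<in> UNIV - {0::'a}. normq q x = 1} = {u. normq q u = 1}"
    by auto
  finally have "card (normq q ` (UNIV - {0::'a})) * (q\<^sup>2 + q + 1) = (q - 1) * (q\<^sup>2 + q + 1)"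
    by (simp add: card_nonzero_elements card_normq_eq_1 mult.commute)
  then show "card (normq q ` (UNIV - {0::'a})) = card (units_Fq q :: 'a set)"
    unfolding card_units_Fq by (simp only: mult_cancel2) simp
qed auto

lemma card_normq_fibre:
  assumes "c \<in> units_Fq q"
  shows "card {t::'a. normq q t = c} = q\<^sup>2 + q + 1"
proof -
  obtain a :: 'a where "a \<noteq> 0" and c: "c = normq q a"
    using assms normq_image by (metis DiffE image_iff singletonI)
  then have "{t. normq q t = c} = {x \<in> UNIV - {0}. normq q x = normq q a}"
    by auto
  also have "card \<dots> = card {x \<in> UNIV - {0::'a}. normq q x = 1}"
    using \<open>a \<noteq> 0\<close> by (intro card_multiplicative_fibre) (auto simp: normq_mult)
  also have "{x \<in> UNIV - {0::'a}. normq q x = 1} = {u. normq q u = 1}"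
    by auto
  finally show ?thesis
    by (simp add: card_normq_eq_1)
qed

lemma card_normq_vimage:
  assumes "C \<subseteq> units_Fq q"
  shows "card {t::'a. normq q t \<in> C} = card C * (q\<^sup>2 + q + 1)"
proof -
  have "{t::'a. normq q t \<in> C} = (\<Union>c\<in>C. {t. normq q t = c})"
    by auto
  also have "card \<dots> = (\<Sum>c\<in>C. card {t::'a. normq q t = c})"
    by (rule card_UN_disjoint) auto
  also have "\<dots> = card C * (q\<^sup>2 + q + 1)"
    using assms card_normq_fibre by (simp add: subset_iff)
  finally show ?thesis .
qed

lemma card_units_Fq_eq_squares:
  "card (units_Fq q :: 'a set) = card ((\<lambda>c::'a. c ^ 2) ` units_Fq q) * card {1, -1::'a}"
proof -
  have "card (units_Fq q :: 'a set) =
      card ((\<lambda>c::'a. c ^ 2) ` units_Fq q) * card {c \<in> units_Fq q. c ^ 2 = (1::'a)}"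
    by (rule card_eq_card_image_mult_card_kernel)
      (auto simp: units_Fq_def power_mult_distrib power_inverse)
  also have "{c \<in> units_Fq q. c ^ 2 = (1::'a)} = {1, -1}"
    using minus_one_in_units_Fq by (auto simp: units_Fq_def power2_eq_1_iff)
  finally show ?thesis .
qed

lemma squares_units_Fq_eq:
  assumes "even q"
  shows "(\<lambda>c::'a. c ^ 2) ` units_Fq q = (units_Fq q :: 'a set)"
proof (rule card_subset_eq)
  show "(\<lambda>c::'a. c ^ 2) ` units_Fq q \<subseteq> (units_Fq q :: 'a set)"
    using units_Fq_power_closed by auto
  have minus_one: "(-1::'a) = 1"
    using assms odd_iff_minus_one_neq_one by blast
  show "card ((\<lambda>c::'a. c ^ 2) ` units_Fq q) = card (units_Fq q :: 'a set)"
    using card_units_Fq_eq_squares unfolding minus_one by simp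
qed auto

lemma card_squares_units_Fq:
  assumes "odd q"
  shows "card ((\<lambda>c::'a. c ^ 2) ` units_Fq q :: 'a set) = (q - 1) div 2"
proof -
  have "card {1, -1::'a} = 2"
    using assms odd_iff_minus_one_neq_one by auto
  then have "q - 1 = card ((\<lambda>c::'a. c ^ 2) ` units_Fq q :: 'a set) * 2"
    using card_units_Fq_eq_squares by (simp add: card_units_Fq)
  then show ?thesis
    by simp
qed

lemma nz_square_Fq_minus_one_iff:
  assumes "odd q"
  shows "nz_square_Fq q (-1::'a) \<longleftrightarrow> q mod 4 = 1"
proof -
  let ?S = "(\<lambda>c::'a. c ^ 2) ` units_Fq q :: 'a set" and ?k = "(q - 1) div 2"
  have "?S \<subseteq> {x::'a. x ^ ?k = 1}"
    using assms units_Fq_power_pred[OF q_pos] by (auto simp flip: power_mult)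
  moreover from this have "card ?S \<le> card {x::'a. x ^ ?k = 1}"
    by (intro card_mono) auto
  moreover have "card {x::'a. x ^ ?k = 1} \<le> card ?S"
  proof -
    have "0 < ?k"
      using assms q_gt_1 by presburger
    then show ?thesis
      using assms card_squares_units_Fq card_roots_of_unity_le[of ?k] by simp
  qed
  ultimately have "?S = {x. x ^ ?k = 1}"
    by (intro card_subset_eq) auto
  then have "nz_square_Fq q (-1::'a) \<longleftrightarrow> (-1::'a) ^ ?k = 1"
    by (simp add: nz_square_Fq_iff)
  also have "\<dots> \<longleftrightarrow> even ?k"
    using assms odd_iff_minus_one_neq_one by (simp add: minus_one_power_iff)
  also have "\<dots> \<longleftrightarrow> q mod 4 = 1"
    using assms by presburger
  finally show ?thesis .
qed


lemma conjugate_product_iff: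
  assumes "(t::'a) \<noteq> 0"
  shows "(\<exists>s. normq q s \<noteq> -1 \<and> t = s ^ q * (s ^ q) ^ q) \<longleftrightarrow>
    (\<exists>c \<in> units_Fq q. c \<noteq> -1 \<and> normq q t = c ^ 2)"
proof
  assume "\<exists>s. normq q s \<noteq> -1 \<and> t = s ^ q * (s ^ q) ^ q"
  then obtain s where s: "normq q s \<noteq> -1" "t = s ^ q * (s ^ q) ^ q"
    by blast
  then have "s \<noteq> 0"
    using assms q_pos by auto
  then have t: "t = normq q s / s"
    using s(2) conjugate_product_eq by simp
  have "normq q (normq q s) = normq q s ^ 3"
    using normq_fixed normq_power_q by blast
  then have "normq q t = normq q s ^ 2"
    unfolding t normq_divide using \<open>s \<noteq> 0\<close> by (simp add: power2_eq_square power3_eq_cube)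
  then show "\<exists>c \<in> units_Fq q. c \<noteq> -1 \<and> normq q t = c ^ 2"
    using s(1) \<open>s \<noteq> 0\<close> normq_in_units_Fq by blast
next
  assume "\<exists>c \<in> units_Fq q. c \<noteq> -1 \<and> normq q t = c ^ 2"
  then obtain c where c: "c \<in> units_Fq q" "c \<noteq> -1" "normq q t = c ^ 2"
    by blast
  then have "c \<noteq> 0" and "c ^ q = c"
    by (simp_all add: units_Fq_def)
  then have norm: "normq q (c / t) = c"
    using c(3) by (simp add: normq_divide normq_fixed power2_eq_square power3_eq_cube)
  moreover have "(c / t) ^ q * ((c / t) ^ q) ^ q = t"
    using conjugate_product_eq[of "c / t"] norm \<open>c \<noteq> 0\<close> assms by simp
  ultimately show "\<exists>s. normq q s \<noteq> -1 \<and> t = s ^ q * (s ^ q) ^ q"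
    using c(2) by metis
qed

lemma conjugate_products_cover_if_even:
  assumes "even q"
  shows "{t::'a. normq q t = -1} \<union> (\<lambda>s. s ^ q * (s ^ q) ^ q) ` {s. normq q s \<noteq> -1} = UNIV"
proof -
  have minus_one: "(-1::'a) = 1"
    using assms odd_iff_minus_one_neq_one by blast
  have "t \<in> (\<lambda>s. s ^ q * (s ^ q) ^ q) ` {s. normq q s \<noteq> -1}" if "normq q t \<noteq> -1" for t :: 'a
  proof (cases "t = 0")
    case True
    then show ?thesis
      using q_pos by (intro image_eqI[of _ _ 0]) auto
  next
    case False
    then obtain c where "c \<in> units_Fq q" and c: "normq q t = c ^ 2"
      using squares_units_Fq_eq[OF assms] normq_in_units_Fq by (metis imageE)
    moreover have "c \<noteq> -1"
      using that c unfolding minus_one by auto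
    ultimately show ?thesis
      using conjugate_product_iff[OF False] by auto
  qed
  then show ?thesis
    by blast
qed

lemma nz_square_Fq_iff_root_neq_minus_one:
  assumes "odd q"
  shows "nz_square_Fq q (a::'a) \<longleftrightarrow> (\<exists>c \<in> units_Fq q. c \<noteq> -1 \<and> a = c ^ 2)"
proof
  assume "nz_square_Fq q a"
  then obtain c where "c \<in> units_Fq q" and a: "a = c ^ 2"
    by (auto simp: nz_square_Fq_iff)
  show "\<exists>c \<in> units_Fq q. c \<noteq> -1 \<and> a = c ^ 2"
  proof (cases "c = -1")
    case True
    have "(1::'a) \<in> units_Fq q" and "(1::'a) \<noteq> -1"
      using assms odd_iff_minus_one_neq_one by (auto simp: units_Fq_def)
    moreover have "a = 1 ^ 2"
      using True a by simp
    ultimately show ?thesis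
      by blast
  qed (use \<open>c \<in> units_Fq q\<close> a in blast)
qed (auto simp: nz_square_Fq_iff)

lemma conjugate_products_if_odd:
  assumes "odd q"
  shows "(\<lambda>s. s ^ q * (s ^ q) ^ q) ` {s. normq q s \<noteq> -1} = insert 0 {t::'a. nz_square_Fq q (normq q t)}"
proof -
  have "(\<exists>s. normq q s \<noteq> -1 \<and> t = s ^ q * (s ^ q) ^ q) \<longleftrightarrow> t = 0 \<or> nz_square_Fq q (normq q t)"
    for t :: 'a
  proof (cases "t = 0")
    case True
    then show ?thesis
      using q_pos by (auto intro!: exI[of _ 0])
  next
    case False
    then show ?thesis
      using conjugate_product_iff nz_square_Fq_iff_root_neq_minus_one[OF assms] by simp
  qed
  then show ?thesis
    by (auto simp: image_iff)
qed

lemma card_normq_minus_one_or_square: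
  assumes "odd q"
  shows "card ({t::'a. normq q t = -1} \<union> {t. nz_square_Fq q (normq q t)}) =
    (if q mod 4 = 1 then (q - 1) div 2 else (q + 1) div 2) * (q\<^sup>2 + q + 1)"
proof -
  let ?S = "(\<lambda>c::'a. c ^ 2) ` units_Fq q"
  have "{t::'a. normq q t = -1} \<union> {t. nz_square_Fq q (normq q t)} = {t. normq q t \<in> insert (-1) ?S}"
    by (auto simp: nz_square_Fq_iff)
  moreover have "insert (-1) ?S \<subseteq> units_Fq q"
    using minus_one_in_units_Fq units_Fq_power_closed by auto
  moreover have "card (insert (-1) ?S) = (if q mod 4 = 1 then (q - 1) div 2 else (q + 1) div 2)"
  proof (cases "q mod 4 = 1")
    case True
    then have "-1 \<in> ?S"
      using nz_square_Fq_minus_one_iff[OF assms] by (simp add: nz_square_Fq_iff)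
    then show ?thesis
      using True card_squares_units_Fq[OF assms] by (simp add: insert_absorb)
  next
    case False
    then have "-1 \<notin> ?S"
      using nz_square_Fq_minus_one_iff[OF assms] by (simp add: nz_square_Fq_iff)
    moreover have "Suc ((q - 1) div 2) = (q + 1) div 2"
      using assms q_gt_1 by presburger
    ultimately show ?thesis
      using False card_squares_units_Fq[OF assms] by simp
  qed
  ultimately show ?thesis
    by (simp only: card_normq_vimage)
qed

end

section \<open>Homogeneous coordinates\<close>

lemma mem_pt: "(x, y, z) \<in> pt (a, b, c) \<longleftrightarrow> (\<exists>k. k \<noteq> 0 \<and> x = k * a \<and> y = k * b \<and> z = k * c)"
  by (auto simp: pt_def)

lemma self_mem_pt: "(a, b, c) \<in> pt (a, b, c)"
  unfolding mem_pt by (intro exI[of _ 1]) simp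

lemma pt_scale:
  fixes k :: "'a::field"
  assumes "k \<noteq> 0"
  shows "pt (k * a, k * b, k * c) = pt (a, b, c)"
proof -
  have "(\<lambda>j. j * k) ` {j. j \<noteq> 0} = {j. j \<noteq> 0}"
    using assms by (auto intro: image_eqI[where x = "j / k" for j])
  moreover have "pt (k * a, k * b, k * c) = (\<lambda>j. (j * a, j * b, j * c)) ` (\<lambda>j. j * k) ` {j. j \<noteq> 0}"
    unfolding pt_def image_image by (simp add: mult.assoc)
  ultimately show ?thesis
    by (simp add: pt_def)
qed

lemma pt_eq_iff:
  "pt (a, b, c) = pt (d, e, f) \<longleftrightarrow> (\<exists>k::'a::field. k \<noteq> 0 \<and> d = k * a \<and> e = k * b \<and> f = k * c)"
proof
  assume eq: "pt (a, b, c) = pt (d, e, f)"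
  from self_mem_pt[of d e f] show "\<exists>k. k \<noteq> 0 \<and> d = k * a \<and> e = k * b \<and> f = k * c"
    unfolding eq[symmetric] mem_pt .
qed (auto simp: pt_scale)

lemma pt_in_points_iff: "pt (a, b, c) \<in> (points :: 'a::field vec3 set set) \<longleftrightarrow> (a, b, c) \<noteq> (0, 0, 0)"
proof
  assume "pt (a, b, c) \<in> (points :: 'a vec3 set set)"
  then obtain d e f where "pt (a, b, c) = pt (d, e, f)" and "(d, e, f) \<noteq> (0, 0, 0)"
    unfolding points_def by auto
  then show "(a, b, c) \<noteq> (0, 0, 0)"
    by (auto simp: pt_eq_iff)
qed (auto simp: points_def)

lemma points_cases:
  assumes "P \<in> (points :: 'a::field vec3 set set)"
  obtains a b c where "P = pt (a, b, c)" and "(a, b, c) \<noteq> (0, 0, 0)"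
  using assms by (auto simp: points_def)

lemma incid_pt: "incid (pt (a, b, c)) (pt (d, e, f)) \<longleftrightarrow> a * d + b * e + c * (f::'a::field) = 0"
proof
  assume "incid (pt (a, b, c)) (pt (d, e, f))"
  then obtain v w where "v \<in> pt (a, b, c)" "w \<in> pt (d, e, f)" "dot3 v w = 0"
    unfolding incid_def by blast
  then obtain k j where "k \<noteq> 0" "j \<noteq> 0" and "dot3 (k * a, k * b, k * c) (j * d, j * e, j * f) = 0"
    unfolding pt_def by auto
  then have "(k * j) * (a * d + b * e + c * f) = 0"
    by (simp add: dot3_def algebra_simps)
  with \<open>k \<noteq> 0\<close> \<open>j \<noteq> 0\<close> show "a * d + b * e + c * f = 0"
    by simp
next
  assume "a * d + b * e + c * f = 0"
  then have "dot3 (a, b, c) (d, e, f) = 0"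
    by (simp add: dot3_def)
  then show "incid (pt (a, b, c)) (pt (d, e, f))"
    unfolding incid_def using self_mem_pt by blast
qed

lemma incid_sym:
  assumes "P \<in> (points :: 'a::field vec3 set set)" and "L \<in> points"
  shows "incid P L \<longleftrightarrow> incid L P"
  using assms by (elim points_cases) (simp add: incid_pt mult.commute)

lemma concurrent_iff_collinear:
  "S \<subseteq> (points :: 'a::field vec3 set set) \<Longrightarrow> concurrent S \<longleftrightarrow> collinear S"
  unfolding concurrent_def collinear_def using incid_sym by blast

fun cross3 :: "'a::field vec3 \<Rightarrow> 'a vec3 \<Rightarrow> 'a vec3" where
  "cross3 (a, b, c) (d, e, f) = (b * f - c * e, c * d - a * f, a * e - b * d)"

lemma orthogonal_imp_parallel_cross3:
  fixes u1 u2 u3 :: "'a::field"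
  assumes "u1 * a + u2 * b + u3 * c = 0" and "u1 * d + u2 * e + u3 * f = 0"
    and xyz: "cross3 (a, b, c) (d, e, f) = (x, y, z)" and "(x, y, z) \<noteq> (0, 0, 0)"
  shows "\<exists>k. u1 = k * x \<and> u2 = k * y \<and> u3 = k * z"
proof -
  have components: "x = b * f - c * e" "y = c * d - a * f" "z = a * e - b * d"
    using xyz by simp_all
  have "u1 * y - u2 * x = c * (u1 * d + u2 * e + u3 * f) - f * (u1 * a + u2 * b + u3 * c)"
    and "u2 * z - u3 * y = a * (u1 * d + u2 * e + u3 * f) - d * (u1 * a + u2 * b + u3 * c)"
    and "u3 * x - u1 * z = b * (u1 * d + u2 * e + u3 * f) - e * (u1 * a + u2 * b + u3 * c)"
    unfolding components by (simp_all add: algebra_simps)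
  then have eqs: "u1 * y = u2 * x" "u2 * z = u3 * y" "u3 * x = u1 * z"
    using assms(1,2) by simp_all
  consider "x \<noteq> 0" | "y \<noteq> 0" | "z \<noteq> 0"
    using assms(4) by auto
  then show ?thesis
  proof cases
    case 1
    then show ?thesis
      using eqs by (intro exI[of _ "u1 / x"]) (auto simp: field_simps)
  next
    case 2
    then show ?thesis
      using eqs by (intro exI[of _ "u2 / y"]) (auto simp: field_simps)
  next
    case 3
    then show ?thesis
      using eqs by (intro exI[of _ "u3 / z"]) (auto simp: field_simps)
  qed
qed

lemma incid_both_iff_eq_cross3:
  assumes nz: "cross3 (a, b, c) (d, e, f) \<noteq> (0, 0, 0)" and "L \<in> points"
  shows "incid (pt (a, b, c)) L \<and> incid (pt (d, e, f)) L \<longleftrightarrow> L = pt (cross3 (a, b, c) (d, e, f))"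
proof
  obtain x y z where xyz: "cross3 (a, b, c) (d, e, f) = (x, y, z)"
    using prod_cases3 by blast
  obtain u1 u2 u3 where L: "L = pt (u1, u2, u3)" and "(u1, u2, u3) \<noteq> (0, 0, 0)"
    using assms(2) by (elim points_cases)
  assume "incid (pt (a, b, c)) L \<and> incid (pt (d, e, f)) L"
  then have "u1 * a + u2 * b + u3 * c = 0" and "u1 * d + u2 * e + u3 * f = 0"
    unfolding L incid_pt by (simp_all add: mult.commute)
  then obtain k where "u1 = k * x" "u2 = k * y" "u3 = k * z"
    using orthogonal_imp_parallel_cross3 xyz nz by metis
  moreover from this have "k \<noteq> 0"
    using \<open>(u1, u2, u3) \<noteq> (0, 0, 0)\<close> by auto
  ultimately show "L = pt (cross3 (a, b, c) (d, e, f))"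
    unfolding L xyz by (simp add: pt_scale)
qed (simp add: incid_pt algebra_simps)

lemma pt_cross3_in_points:
  "cross3 (a, b, c) (d, e, f) \<noteq> (0, 0, 0) \<Longrightarrow> pt (cross3 (a, b, c) (d, e, f)) \<in> points"
  by (simp add: pt_in_points_iff)

lemma join_pt:
  assumes "cross3 (a, b, c) (d, e, f) \<noteq> (0, 0, 0)"
  shows "join (pt (a, b, c)) (pt (d, e, f)) = pt (cross3 (a, b, c) (d, e, f))"
  unfolding join_def using incid_both_iff_eq_cross3[OF assms] pt_cross3_in_points[OF assms]
  by (intro the_equality) blast+

lemma meet_eq_join:
  assumes "L \<in> points" and "M \<in> points"
  shows "meet L M = join L M"
proof -
  have "(\<lambda>P. P \<in> points \<and> incid P L \<and> incid P M) = (\<lambda>P. P \<in> points \<and> incid L P \<and> incid M P)"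
    using incid_sym assms by blast
  then show ?thesis
    by (simp add: meet_def join_def)
qed

lemma meet_pt:
  assumes "cross3 (a, b, c) (d, e, f) \<noteq> (0, 0, 0)"
  shows "meet (pt (a, b, c)) (pt (d, e, f)) = pt (cross3 (a, b, c) (d, e, f))"
proof -
  have "pt (a, b, c) \<in> points" and "pt (d, e, f) \<in> points"
    using assms by (auto simp: pt_in_points_iff)
  then show ?thesis
    using join_pt[OF assms] by (simp add: meet_eq_join)
qed

lemma collinear_pt_pt_iff:
  assumes "cross3 (a, b, c) (d, e, f) \<noteq> (0, 0, 0)"
  shows "collinear {pt (a, b, c), pt (d, e, f), P} \<longleftrightarrow> incid P (pt (cross3 (a, b, c) (d, e, f)))"
  unfolding collinear_def using incid_both_iff_eq_cross3[OF assms] pt_cross3_in_points[OF assms]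
  by auto

lemma card_triangle: "card {pt (s, 1, 0), pt (0, u, 1), pt (1, 0, v::'a::field)} = 3"
  by (simp add: pt_eq_iff)

lemma collinear_triangle_iff:
  "collinear {pt (s, 1, 0), pt (0, u, 1), pt (1, 0, v::'a::field)} \<longleftrightarrow> s * u * v = -1"
proof -
  have "collinear {pt (s, 1, 0), pt (0, u, 1), pt (1, 0, v)} \<longleftrightarrow> 1 + v * (s * u) = 0"
    by (simp add: collinear_pt_pt_iff incid_pt)
  also have "\<dots> \<longleftrightarrow> s * u * v = -1"
    by (simp add: add_eq_0_iff mult_ac)
  finally show ?thesis .
qed

lemma card_frame: "card {pt (1, 0, 0), pt (0, 1, 0), pt (0, 0, 1::'a::field)} = 3"
  by (simp add: pt_eq_iff)

lemma not_collinear_frame: "\<not> collinear {pt (1, 0, 0), pt (0, 1, 0), pt (0, 0, 1::'a::field)}"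
  by (simp add: collinear_pt_pt_iff incid_pt)

lemma pts_on_mT: "pts_on (mT :: 'a::field vec3 set) = insert (pt (1, 0, 0)) (range (\<lambda>t. pt (t, 1, 0)))"
proof (intro equalityI subsetI)
  fix P :: "'a vec3 set"
  assume "P \<in> pts_on mT"
  then have "P \<in> points" and "incid P (pt (0, 0, 1))"
    unfolding pts_on_def mT_def by auto
  then obtain a b c where P: "P = pt (a, b, c)" "(a, b, c) \<noteq> (0, 0, 0)" and "c = 0"
    by (metis points_cases incid_pt mult_1_right mult_zero_right add_0)
  show "P \<in> insert (pt (1, 0, 0)) (range (\<lambda>t. pt (t, 1, 0)))"
  proof (cases "b = 0")
    case True
    then have "P = pt (1, 0, 0)"
      using P \<open>c = 0\<close> by (auto simp: pt_eq_iff intro!: exI[of _ "1 / a"])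
    then show ?thesis
      by simp
  next
    case False
    then have "P = pt (a / b, 1, 0)"
      using P \<open>c = 0\<close> by (auto simp: pt_eq_iff intro!: exI[of _ "1 / b"])
    then show ?thesis
      by simp
  qed
qed (auto simp: pts_on_def mT_def pt_in_points_iff incid_pt)

lemma lines_through_Tpt: "{l \<in> lines. incid Tpt l} = pts_on (mT :: 'a::field vec3 set)"
proof -
  have "Tpt \<in> (points :: 'a vec3 set set)"
    by (simp add: Tpt_def pt_in_points_iff)
  then show ?thesis
    unfolding pts_on_def using incid_sym by (auto simp: Tpt_def mT_def)
qed

lemma Pr_pt:
  assumes "(x, y) \<noteq> (0, 0)"
  shows "Pr (pt (x, y, z)) = pt (x, y, 0::'a::field)"
proof -
  have "cross3 (0, 0, 1) (x, y, z) \<noteq> (0, 0, 0)" and "cross3 (- y, x, 0) (0, 0, 1) \<noteq> (0, 0, 0)"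
    using assms by auto
  from join_pt[OF this(1)] meet_pt[OF this(2)] show ?thesis
    by (simp add: Pr_def Tpt_def mT_def)
qed

section \<open>The figure of \<open>T\<close>\<close>

context cubic_extension
begin

lemma phi_pt: "phi q (pt (a, b, c)) = pt (c ^ q, a ^ q, (b::'a) ^ q)"
proof -
  have "(\<lambda>k::'a. k ^ q) ` {k. k \<noteq> 0} = {k. k \<noteq> 0}"
  proof (intro equalityI subsetI)
    fix k :: 'a
    assume "k \<in> {k. k \<noteq> 0}"
    then show "k \<in> (\<lambda>k. k ^ q) ` {k. k \<noteq> 0}"
      using frobenius_cube[of k] by (intro image_eqI[of _ _ "(k ^ q) ^ q"]) auto
  qed auto
  moreover have "phi q (pt (a, b, c)) = (\<lambda>k. (k * c ^ q, k * a ^ q, k * b ^ q)) ` (\<lambda>k. k ^ q) ` {k. k \<noteq> 0}"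
    unfolding phi_def pt_def image_image by (simp add: power_mult_distrib)
  ultimately show ?thesis
    by (simp add: pt_def)
qed

lemma phi_Tpt: "phi q Tpt = pt (1, 0, 0::'a)"
  by (simp add: Tpt_def phi_pt)

lemma orb_pt_s10: "orb q (pt (s, 1, 0)) = {pt (s, 1, 0), pt (0, s ^ q, 1), pt (1, 0, (s ^ q) ^ q :: 'a)}"
  by (simp add: orb_def phi_pt)

lemma orb_pt_100: "orb q (pt (1, 0, 0)) = {pt (1, 0, 0), pt (0, 1, 0), pt (0, 0, 1::'a)}"
  by (simp add: orb_def phi_pt)

lemma typeII_pt_s10_iff: "typeII_pt q (pt (s, 1, 0::'a)) \<longleftrightarrow> normq q s = -1"
  by (simp add: typeII_pt_def orb_pt_s10 card_triangle collinear_triangle_iff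
      normq_eq_mult_conjugates pt_in_points_iff)

lemma not_typeII_pt_100: "\<not> typeII_pt q (pt (1, 0, 0::'a))"
  by (simp add: typeII_pt_def orb_pt_100 not_collinear_frame)

lemma typeIII_line_s10_iff: "typeIII_line q (pt (s, 1, 0::'a)) \<longleftrightarrow> normq q s \<noteq> -1"
  by (simp add: typeIII_line_def orb_pt_s10 card_triangle concurrent_iff_collinear
      collinear_triangle_iff normq_eq_mult_conjugates pt_in_points_iff)

lemma typeIII_line_100: "typeIII_line q (pt (1, 0, 0::'a))"
  by (simp add: typeIII_line_def orb_pt_100 card_frame concurrent_iff_collinear
      not_collinear_frame pt_in_points_iff)

lemma E_set_Tpt: "E_set q (Tpt::'a vec3 set) = (\<lambda>t. pt (t, 1, 0)) ` {t. normq q t = -1}"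
proof -
  have "join (phi q Tpt) (phi q (phi q Tpt)) = (mT :: 'a vec3 set)"
    by (simp add: Tpt_def phi_pt join_pt mT_def)
  then have "E_set q (Tpt::'a vec3 set) = {P \<in> pts_on mT. typeII_pt q P}"
    by (auto simp: E_set_def pts_on_def typeII_pt_def)
  also have "\<dots> = (\<lambda>t. pt (t, 1, 0)) ` {t. normq q t = -1}"
    by (auto simp: pts_on_mT not_typeII_pt_100 typeII_pt_s10_iff)
  finally show ?thesis .
qed

lemma F_set_Tpt:
  "F_set q (Tpt::'a vec3 set) =
     insert (pt (1, 0, 0)) ((\<lambda>s. pt (s ^ q * (s ^ q) ^ q, 1, - (s ^ q))) ` {s. normq q s \<noteq> -1})"
proof -
  have "F_set q (Tpt::'a vec3 set) =
      (\<lambda>l. meet (phi q l) (phi q (phi q l))) ` {l \<in> pts_on mT. typeIII_line q l}"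
    unfolding F_set_def lines_through_Tpt[symmetric] typeIII_line_def by auto
  also have "{l \<in> pts_on mT. typeIII_line q l} =
      insert (pt (1, 0, 0)) ((\<lambda>s. pt (s, 1, 0)) ` {s::'a. normq q s \<noteq> -1})"
    by (auto simp: pts_on_mT typeIII_line_100 typeIII_line_s10_iff)
  finally show ?thesis
    by (simp add: image_image phi_pt meet_pt)
qed

lemma Pr_Fig_Tpt:
  "Pr ` Fig q (Tpt::'a vec3 set) = insert (pt (1, 0, 0))
     ((\<lambda>t. pt (t, 1, 0)) ` ({t. normq q t = -1} \<union> (\<lambda>s. s ^ q * (s ^ q) ^ q) ` {s. normq q s \<noteq> -1}))"
  by (simp add: Fig_def E_set_Tpt F_set_Tpt image_Un image_image Pr_pt)

lemma S_theta_eq: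
  assumes "\<theta> \<noteq> 0"
  shows "S_theta q \<theta> = (\<lambda>t. pt (t, 1, 0)) ` {t. normq q t = normq q (\<theta>::'a)}"
proof -
  have "pt (x * \<theta>, x ^ q, 0) = pt (\<theta> * (x / x ^ q), 1, 0)" if "x \<noteq> 0" for x :: 'a
  proof -
    have "x ^ q * (\<theta> * (x / x ^ q)) = x * \<theta>"
      using that by (simp add: field_simps)
    then have "pt (x * \<theta>, x ^ q, 0) = pt (x ^ q * (\<theta> * (x / x ^ q)), x ^ q * 1, x ^ q * 0)"
      by (simp only: mult_1_right mult_zero_right)
    also have "\<dots> = pt (\<theta> * (x / x ^ q), 1, 0)"
      using that by (intro pt_scale) simp
    finally show ?thesis .
  qed
  then have "S_theta q \<theta> = (\<lambda>x. pt (\<theta> * (x / x ^ q), 1, 0)) ` (UNIV - {0})"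
    unfolding S_theta_def by (auto simp del: times_divide_eq_right)
  also have "\<dots> = (\<lambda>u. pt (\<theta> * u, 1, 0)) ` (\<lambda>x. x / x ^ q) ` (UNIV - {0})"
    by (simp only: image_image)
  also have "\<dots> = (\<lambda>u. pt (\<theta> * u, 1, 0)) ` {u. normq q u = 1}"
    by (simp only: image_divide_frobenius)
  also have "\<dots> = (\<lambda>t. pt (t, 1, 0)) ` {t. normq q t = normq q \<theta>}"
  proof (intro equalityI subsetI)
    fix P
    assume "P \<in> (\<lambda>t. pt (t, 1, 0)) ` {t. normq q t = normq q \<theta>}"
    then obtain t where "P = pt (\<theta> * (t / \<theta>), 1, 0)" and "normq q (t / \<theta>) = 1"
      using assms by (auto simp: normq_divide)
    then show "P \<in> (\<lambda>u. pt (\<theta> * u, 1, 0)) ` {u. normq q u = 1}"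
      by blast
  qed (auto simp: normq_mult)
  finally show ?thesis .
qed

lemma Union_S_theta_nz_square:
  "\<Union> {S_theta q \<theta> | \<theta>. \<theta> \<noteq> 0 \<and> nz_square_Fq q (normq q \<theta>)} =
    (\<lambda>t. pt (t, 1, 0)) ` {t::'a. nz_square_Fq q (normq q t)}"
proof (intro equalityI subsetI)
  fix P
  assume "P \<in> \<Union> {S_theta q \<theta> | \<theta>. \<theta> \<noteq> 0 \<and> nz_square_Fq q (normq q (\<theta>::'a))}"
  then obtain \<theta> :: 'a where "\<theta> \<noteq> 0" "nz_square_Fq q (normq q \<theta>)" "P \<in> S_theta q \<theta>"
    by blast
  then show "P \<in> (\<lambda>t. pt (t, 1, 0)) ` {t. nz_square_Fq q (normq q t)}"
    by (auto simp: S_theta_eq)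
next
  fix P
  assume "P \<in> (\<lambda>t. pt (t, 1, 0)) ` {t::'a. nz_square_Fq q (normq q t)}"
  then obtain t :: 'a where P: "P = pt (t, 1, 0)" and t: "nz_square_Fq q (normq q t)"
    by blast
  then have "t \<noteq> 0"
    by (auto simp: nz_square_Fq_def)
  then have "P \<in> S_theta q t"
    using P by (simp add: S_theta_eq)
  then show "P \<in> \<Union> {S_theta q \<theta> | \<theta>. \<theta> \<noteq> 0 \<and> nz_square_Fq q (normq q \<theta>)}"
    using \<open>t \<noteq> 0\<close> t by blast
qed

lemma Pr_Fig_Tpt_if_odd:
  assumes "odd q"
  shows "Pr ` Fig q (Tpt::'a vec3 set) = {phi q Tpt, phi q (phi q Tpt)} \<union> S_theta q (-1) \<union>
    \<Union> {S_theta q \<theta> | \<theta>. \<theta> \<noteq> 0 \<and> nz_square_Fq q (normq q \<theta>)}"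
proof -
  have "normq q (-1::'a) = -1"
    using assms by (simp add: normq_def)
  then have "S_theta q (-1::'a) = (\<lambda>t. pt (t, 1, 0)) ` {t. normq q t = -1}"
    by (simp add: S_theta_eq)
  then show ?thesis
    unfolding Pr_Fig_Tpt conjugate_products_if_odd[OF assms] Union_S_theta_nz_square
    by (simp add: phi_Tpt phi_pt image_Un)
qed

lemma card_Pr_Fig_Tpt_if_odd:
  assumes "odd q"
  shows "card (Pr ` Fig q (Tpt::'a vec3 set)) =
    2 + card ({t::'a. normq q t = -1} \<union> {t. nz_square_Fq q (normq q t)})"
proof -
  let ?A = "{t::'a. normq q t = -1} \<union> {t. nz_square_Fq q (normq q t)}"
  have "Pr ` Fig q (Tpt::'a vec3 set) = insert (pt (1, 0, 0)) ((\<lambda>t. pt (t, 1, 0)) ` insert 0 ?A)"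
    unfolding Pr_Fig_Tpt conjugate_products_if_odd[OF assms] by simp
  moreover have "pt (1, 0, 0) \<notin> (\<lambda>t. pt (t, 1, 0::'a)) ` insert 0 ?A"
    by (auto simp: pt_eq_iff)
  ultimately have "card (Pr ` Fig q (Tpt::'a vec3 set)) = Suc (card ((\<lambda>t. pt (t, 1, 0)) ` insert 0 ?A))"
    by simp
  also have "card ((\<lambda>t. pt (t, 1, 0)) ` insert 0 ?A) = card (insert 0 ?A)"
    by (rule card_image) (auto simp: inj_on_def pt_eq_iff)
  also have "card (insert 0 ?A) = Suc (card ?A)"
    by (auto simp: nz_square_Fq_def)
  finally show ?thesis
    by simp
qed

end

theorem theorem6p1:
  fixes p n q :: nat and T :: "('a::{field,finite}) vec3 set"
  assumes "prime p" and "n > 0" and "q = p ^ n"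
    and "card (UNIV :: 'a set) = q ^ 3" and "T = Tpt"
  shows "(even q \<longrightarrow> Pr ` Fig q T = pts_on mT)
       \<and> (odd q \<longrightarrow>
            Pr ` Fig q T =
              {phi q T, phi q (phi q T)} \<union> S_theta q (-1) \<union>
              \<Union> {S_theta q \<theta> | \<theta>. \<theta> \<noteq> 0 \<and> nz_square_Fq q (normq q \<theta>)}
          \<and> (q mod 4 = 1 \<longrightarrow>
               card (Pr ` Fig q T) = 2 + (q - 1) div 2 * (q^2 + q + 1))
          \<and> (q mod 4 = 3 \<longrightarrow>
               card (Pr ` Fig q T) = 2 + (q + 1) div 2 * (q^2 + q + 1)))"
proof -
  have "1 < q"
    unfolding assms(3) using prime_gt_1_nat[OF assms(1)] assms(2) by (rule one_less_power)
  with assms(4) interpret cubic_extension q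
    by unfold_locales
  have "Pr ` Fig q Tpt = pts_on (mT :: 'a vec3 set)" if "even q"
    using conjugate_products_cover_if_even[OF that] by (simp add: Pr_Fig_Tpt pts_on_mT)
  moreover have "card (Pr ` Fig q (Tpt :: 'a vec3 set)) =
      2 + (if q mod 4 = 1 then (q - 1) div 2 else (q + 1) div 2) * (q\<^sup>2 + q + 1)" if "odd q"
    using card_Pr_Fig_Tpt_if_odd[OF that] card_normq_minus_one_or_square[OF that] by simp
  ultimately show ?thesis
    using Pr_Fig_Tpt_if_odd unfolding assms(5) by auto
qed

end
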